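(* Let $N\ge1$ and let $\{a_n\}_{n=0}^{N-1},\{b_n\}_{n=0}^{N-1},\{c_n\}_{n=1}^{N}$ be real sequences with $c_n>0$, $a_{N-1}=0$, $b_{N-1}=\tfrac12$, $c_N=1$, satisfying for $n=1,\dots,N-1$ $$a_{n-1}=a_n\Big(\frac{1}{c_n^2+1}\Big)^{1/2}+b_n\Big(\frac{1}{c_n^2+1}\Big)^{3/2}c_n^2,\quad b_{n-1}=b_n\Big(\frac{1}{c_n^2+1}\Big)^{3/2}+\frac{c_n}{c_n^2+1},\quad a_n+b_n=\frac{1-c_n^2}{c_n(1+c_n^2)^{1/2}}.$$ Then for each $n\in\{2,\dots,N\}$, $c_{n-1}$ is the unique root in $(0,1)$ of the equation in $x$ $$(1-x^2)\,c_n(1+c_n^2)=x(1+x^2)^{1/2},$$ and $c_N>c_{N-1}>\cdots>c_2>c_1$.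
   Context: These sequences describe the equilibrium of the risk-neutral insider model (Model 2) of an $N$-period Kyle-type insider trading model, in which the insider's trading intensity in period $n$ is $c_n\sigma_u\Delta t_N^{1/2}\Sigma_{n-1}^{-1/2}$; the claim concerns only the sequences as defined here. *)

theory Defs
  imports Complex_Main
begin

end

theory Submission
  imports Defs
begin

text \<open>The recursions telescope: adding them, the sum s(n-1) = a(n-1) + b(n-1) equals
  s(n) / sqrt(1 + c(n)^2) + c(n) / (1 + c(n)^2), and inserting the constraint on s(n) (or the
  terminal values when n = N) gives s(n-1) = 1 / k with k = c(n) (1 + c(n)^2). Comparing with the
  constraint on s(n-1) shows that c(n-1) solves (1 - x^2) k = x sqrt(1 + x^2). The difference of
  the two sides is strictly decreasing for x \<ge> 0, which gives uniqueness; it is negative at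
  x = 1, and also at x = c(n) \<le> 1 because (1 - c^2)(1 + c^2) < 1 \<le> sqrt(1 + c^2). Hence
  the root lies below min 1 c(n).\<close>

lemma powr_three_halves: "(t::real) > 0 \<Longrightarrow> t powr (3/2) = t * sqrt t"
proof -
  assume t: "t > 0"
  have "t powr (3/2) = t powr (1 + 1/2)"
    by simp
  also have "\<dots> = t powr 1 * t powr (1/2)"
    by (rule powr_add)
  also have "\<dots> = t * sqrt t"
    using t by (simp add: powr_half_sqrt)
  finally show ?thesis .
qed

lemma recurrence_sum_step:
  fixes A B C :: real
  assumes C: "C > 0" and sum: "A + B = (1 - C^2) / (C * sqrt (1 + C^2))"
  shows "(A * sqrt (1 / (C^2 + 1)) + B * (1 / (C^2 + 1)) powr (3/2) * C^2)
       + (B * (1 / (C^2 + 1)) powr (3/2) + C / (C^2 + 1))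
       = 1 / (C * (1 + C^2))"
proof -
  define t where "t = 1 / (C^2 + 1)"
  have pos: "C^2 + 1 > 0"
    by (simp add: add_nonneg_pos)
  have t: "t > 0" and t_inv: "t * (C^2 + 1) = 1"
    using pos by (simp_all add: t_def)
  have "B * t powr (3/2) * C^2 + B * t powr (3/2) = B * sqrt t * (t * (C^2 + 1))"
    using powr_three_halves[OF t] by (simp add: algebra_simps)
  then have collapse: "B * t powr (3/2) * C^2 + B * t powr (3/2) = B * sqrt t"
    by (simp add: t_inv)
  have sqrt_t: "sqrt t = 1 / sqrt (1 + C^2)"
    by (simp add: t_def real_sqrt_divide add.commute)
  have sq: "sqrt (1 + C^2) * sqrt (1 + C^2) = 1 + C^2"
    using pos by simp
  have "(A * sqrt t + B * t powr (3/2) * C^2) + (B * t powr (3/2) + C / (C^2 + 1))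
      = (A + B) * sqrt t + C / (C^2 + 1)"
    using collapse by (simp add: algebra_simps)
  also have "\<dots> = (1 - C^2) / (C * (1 + C^2)) + C^2 / (C * (1 + C^2))"
    using C sq by (simp add: sum sqrt_t power2_eq_square add.commute)
  also have "\<dots> = 1 / (C * (1 + C^2))"
    by (simp flip: add_divide_distrib)
  finally show ?thesis
    by (simp add: t_def)
qed

lemma sum_value_imp_root_eq:
  fixes x k :: real
  assumes x: "x > 0" and k: "k > 0"
    and eq: "(1 - x^2) / (x * sqrt (1 + x^2)) = 1 / k"
  shows "(1 - x^2) * k = x * sqrt (1 + x^2)"
proof -
  have "x * sqrt (1 + x^2) > 0"
    using x by (simp add: add_pos_nonneg)
  with eq k have "(1 - x^2) * k = 1 * (x * sqrt (1 + x^2))"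
    by (subst (asm) frac_eq_eq) auto
  then show ?thesis
    by simp
qed

lemma mult_sqrt_one_plus_sq_strict_mono:
  fixes x y :: real
  assumes "0 \<le> x" "x < y"
  shows "x * sqrt (1 + x^2) < y * sqrt (1 + y^2)"
proof -
  have "sqrt (1 + x^2) < sqrt (1 + y^2)"
    using assms by (simp add: power_strict_mono)
  moreover have "sqrt (1 + x^2) > 0"
    by (simp add: add_pos_nonneg)
  ultimately show ?thesis
    using assms by (simp add: mult_strict_mono)
qed

lemma root_gap_strict_antimono:
  fixes k x y :: real
  assumes k: "k \<ge> 0" and "0 \<le> x" "x < y"
  shows "(1 - y^2) * k - y * sqrt (1 + y^2) < (1 - x^2) * k - x * sqrt (1 + x^2)"
proof -
  have "x^2 \<le> y^2"
    using assms by (simp add: power_mono)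
  then have "(1 - y^2) * k \<le> (1 - x^2) * k"
    using k by (simp add: mult_right_mono)
  with mult_sqrt_one_plus_sq_strict_mono[OF assms(2,3)] show ?thesis
    by linarith
qed

lemma root_eq_unique:
  fixes k x y :: real
  assumes "k \<ge> 0" "x \<ge> 0" "y \<ge> 0"
    and "(1 - x^2) * k = x * sqrt (1 + x^2)" "(1 - y^2) * k = y * sqrt (1 + y^2)"
  shows "x = y"
  using root_gap_strict_antimono[of k x y] root_gap_strict_antimono[of k y x] assms
  by (cases x y rule: linorder_cases) auto

lemma root_eq_less_one:
  fixes k x :: real
  assumes k: "k > 0" and x: "x > 0" and eq: "(1 - x^2) * k = x * sqrt (1 + x^2)"
  shows "x < 1"
proof -
  have "x * sqrt (1 + x^2) > 0"
    using x by (simp add: add_pos_nonneg)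
  then have "(1 - x^2) * k > 0"
    using eq by simp
  then have "1 - x^2 > 0"
    using k by (simp add: zero_less_mult_iff)
  then have "x^2 < 1^2"
    by simp
  then show ?thesis
    using x by (simp add: power_less_imp_less_base)
qed

lemma root_gap_at_self_neg:
  fixes c :: real
  assumes c: "0 < c" "c \<le> 1"
  shows "(1 - c^2) * (c * (1 + c^2)) - c * sqrt (1 + c^2) < 0"
proof -
  have "(1 - c^2) * (1 + c^2) = 1 - c^2 * c^2"
    by (simp add: algebra_simps)
  also have "\<dots> < 1"
    using c by simp
  also have "1 \<le> sqrt (1 + c^2)"
    by simp
  finally have "c * ((1 - c^2) * (1 + c^2)) < c * sqrt (1 + c^2)"
    using c by simp
  then show ?thesis
    by (simp add: algebra_simps)
qed

lemma root_eq_less_param: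
  fixes c x :: real
  assumes c: "0 < c" "c \<le> 1" and x: "x \<ge> 0"
    and eq: "(1 - x^2) * (c * (1 + c^2)) = x * sqrt (1 + x^2)"
  shows "x < c"
proof (rule ccontr)
  assume "\<not> x < c"
  then have "x = c \<or> c < x"
    by auto
  moreover have "c * (1 + c^2) \<ge> 0"
    using c by (simp add: add_nonneg_nonneg)
  ultimately show False
    using root_gap_at_self_neg[OF c] root_gap_strict_antimono[of "c * (1 + c^2)" c x] c eq
    by auto
qed

theorem proposition4:
  fixes N :: nat and a b c :: "nat \<Rightarrow> real"
  assumes N: "N \<ge> 1"
    and cpos: "\<And>n. 1 \<le> n \<Longrightarrow> n \<le> N \<Longrightarrow> c n > 0"
    and aN: "a (N - 1) = 0"
    and bN: "b (N - 1) = 1 / 2"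
    and cN: "c N = 1"
    and rec_a: "\<And>n. 1 \<le> n \<Longrightarrow> n \<le> N - 1 \<Longrightarrow>
      a (n - 1) = a n * sqrt (1 / (c n ^ 2 + 1))
                  + b n * (1 / (c n ^ 2 + 1)) powr (3 / 2) * c n ^ 2"
    and rec_b: "\<And>n. 1 \<le> n \<Longrightarrow> n \<le> N - 1 \<Longrightarrow>
      b (n - 1) = b n * (1 / (c n ^ 2 + 1)) powr (3 / 2) + c n / (c n ^ 2 + 1)"
    and rec_ab: "\<And>n. 1 \<le> n \<Longrightarrow> n \<le> N - 1 \<Longrightarrow>
      a n + b n = (1 - c n ^ 2) / (c n * sqrt (1 + c n ^ 2))"
  shows "(\<forall>n \<in> {2..N}.
            c (n - 1) \<in> {0<..<1}
          \<and> (1 - c (n - 1) ^ 2) * c n * (1 + c n ^ 2) = c (n - 1) * sqrt (1 + c (n - 1) ^ 2)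
          \<and> (\<forall>x \<in> {0<..<1::real}.
                (1 - x ^ 2) * c n * (1 + c n ^ 2) = x * sqrt (1 + x ^ 2) \<longrightarrow> x = c (n - 1)))
       \<and> (\<forall>n \<in> {2..N}. c (n - 1) < c n)"
proof -
  have k_pos: "c n * (1 + c n ^ 2) > 0" if "n \<in> {2..N}" for n
    using cpos[of n] that by (simp add: add_pos_nonneg)
  have sum: "a (n - 1) + b (n - 1) = 1 / (c n * (1 + c n ^ 2))" if n: "n \<in> {2..N}" for n
  proof (cases "n = N")
    case False
    with n show ?thesis
      using rec_a[of n] rec_b[of n] rec_ab[of n] cpos[of n] recurrence_sum_step[of "c n" "a n" "b n"]
      by auto
  qed (use aN bN cN in simp)
  have root: "(1 - c (n - 1) ^ 2) * (c n * (1 + c n ^ 2)) = c (n - 1) * sqrt (1 + c (n - 1) ^ 2)"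
    and pos: "c (n - 1) > 0" if n: "n \<in> {2..N}" for n
  proof -
    show "c (n - 1) > 0"
      using cpos[of "n - 1"] n by auto
    with n show "(1 - c (n - 1) ^ 2) * (c n * (1 + c n ^ 2)) = c (n - 1) * sqrt (1 + c (n - 1) ^ 2)"
      using sum_value_imp_root_eq k_pos sum rec_ab[of "n - 1"] by auto
  qed
  have less_one: "c (n - 1) < 1" if "n \<in> {2..N}" for n
    using root_eq_less_one k_pos root pos that by blast
  have c_le_one: "c n \<le> 1" if "n \<in> {2..N}" for n
    using cN less_one[of "n + 1"] that by (cases "n = N") auto
  have decreasing: "c (n - 1) < c n" if "n \<in> {2..N}" for n
  proof (rule root_eq_less_param)
    show "0 < c n" "c n \<le> 1" "0 \<le> c (n - 1)"
      using cpos[of n] c_le_one pos[of n] that by auto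
  qed (rule root[OF that])
  have unique: "x = c (n - 1)"
    if n: "n \<in> {2..N}" and x: "x \<in> {0<..<1}"
      and eq: "(1 - x ^ 2) * (c n * (1 + c n ^ 2)) = x * sqrt (1 + x ^ 2)" for n x
    using root_eq_unique[OF less_imp_le[OF k_pos[OF n]] _ _ eq root[OF n]] x pos[OF n] by simp
  show ?thesis
    using root pos less_one decreasing unique by (auto simp: mult.assoc)
qed

end
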